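(* Let $\mathfrak g$ be of type $A_n$, and for $i\in I$, $b\in\mathcal B(\infty)$ set $\mathrm{jump}_i(b)=\varepsilon_i(b)+\varepsilon_i^\ast(b)+\langle h_i,\mathrm{wt}(b)\rangle$. Then for all $i\in I$ and $b\in\mathcal B(\infty)$: (1) $\mathrm{jump}_i(b)=(\varepsilon_i(b)-\Sigma_1(b))+(\varepsilon_i^\ast(b)-\Sigma_1^\ast(b))$; in particular $\mathrm{jump}_i(b)\ge0$. (2) If $\mathrm{jump}_i(b)=0$, then $\widetilde f_i(b)=\widetilde f_i^\ast(b)$.
   Context: $I=\{1,\dots,n\}$, $\langle h_i,\alpha_j\rangle=2$ if $i=j$, $-1$ if $|i-j|=1$, $0$ otherwise. $\mathcal I=\{(s,t)\in\mathbb Z_{>0}\times I:s+t\le n+1\}$; $\mathcal B(\infty)$ is the set of $b=(b_{s,t})_{(s,t)\in\mathcal I}\in\mathbb Z_{\ge0}^{\mathcal I}$ with $b_{1,k}\ge b_{2,k-1}\ge\dots\ge b_{k,1}$ for $1\le k\le n$. Convention: $b_{s,t}=0$, $\mathbf e_{s,t}=0$ for $(s,t)\notin\mathcal I$. $\mathrm{wt}(b)=-\sum b_{s,t}\alpha_t$. $\partial_{s,t}(b)=b_{s,t}-b_{s,t+1}-b_{s+1,t-1}+b_{s+1,t}$, $\partial^\ast_{s,t}(b)=b_{s-1,t}-b_{s-1,t+1}-b_{s,t-1}+b_{s,t}$. For $1\le k\le n+1-i$: $\Sigma_k(b)=\sum_{s=k}^{n+1-i}\partial_{s,i}(b)$,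 $\varepsilon_i(b)=\max_k\Sigma_k(b)$, $m_i(b)$ the smallest maximizing $k$, $\widetilde f_i(b)=b+\mathbf e_{m_i(b),i}$. For $1\le k\le i$: $\Sigma^\ast_k(b)=\sum_{t=1}^k\partial^\ast_{t,i+1-t}(b)$, $\varepsilon_i^\ast(b)=\max_k\Sigma^\ast_k(b)$, $m_i^\ast(b)$ the smallest maximizing $k$, $\widetilde f_i^\ast(b)=b+\sum_{t=1}^{m_i^\ast(b)}(\mathbf e_{t,i+1-t}-\mathbf e_{t-1,i+1-t})$. *)

theory Defs
  imports Main
begin

text \<open>Elements of B(infinity) are encoded as
  functions b :: nat => nat => int (b s t = b_{s,t}), required to vanish
  outside the index set calI (this encodes the convention b_{s,t} = 0 there).\<close>

definition cartan :: "nat \<Rightarrow> nat \<Rightarrow> int" where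
  "cartan i j = (if i = j then 2 else if i = j + 1 \<or> j = i + 1 then -1 else 0)"

definition calI :: "nat \<Rightarrow> (nat \<times> nat) set" where
  "calI n = {(s, t). 0 < s \<and> 1 \<le> t \<and> t \<le> n \<and> s + t \<le> n + 1}"

definition Binf :: "nat \<Rightarrow> (nat \<Rightarrow> nat \<Rightarrow> int) set" where
  "Binf n = {b. (\<forall>s t. (s, t) \<notin> calI n \<longrightarrow> b s t = 0)
               \<and> (\<forall>s t. (s, t) \<in> calI n \<longrightarrow> 0 \<le> b s t)
               \<and> (\<forall>k \<in> {1..n}. \<forall>s. 1 \<le> s \<and> s < k \<longrightarrow> b s (k + 1 - s) \<ge> b (s + 1) (k - s))}"

definition unitv :: "nat \<Rightarrow> nat \<Rightarrow> nat \<Rightarrow> (nat \<Rightarrow> nat \<Rightarrow> int)" where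
  "unitv n s t = (\<lambda>s' t'. if (s', t') = (s, t) \<and> (s, t) \<in> calI n then 1 else 0)"

text \<open>wt(b) = - sum b_{s,t} alpha_t, recorded as its coefficient on alpha_t.\<close>
definition wt :: "nat \<Rightarrow> (nat \<Rightarrow> nat \<Rightarrow> int) \<Rightarrow> nat \<Rightarrow> int" where
  "wt n b t = - (\<Sum>s\<in>{1..n}. b s t)"

definition pair_h :: "nat \<Rightarrow> nat \<Rightarrow> (nat \<Rightarrow> int) \<Rightarrow> int" where
  "pair_h n i lam = (\<Sum>t\<in>{1..n}. cartan i t * lam t)"

definition dd :: "(nat \<Rightarrow> nat \<Rightarrow> int) \<Rightarrow> nat \<Rightarrow> nat \<Rightarrow> int" where
  "dd b s t = b s t - b s (t + 1) - b (s + 1) (t - 1) + b (s + 1) t"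

definition dds :: "(nat \<Rightarrow> nat \<Rightarrow> int) \<Rightarrow> nat \<Rightarrow> nat \<Rightarrow> int" where
  "dds b s t = b (s - 1) t - b (s - 1) (t + 1) - b s (t - 1) + b s t"

definition Sig :: "nat \<Rightarrow> nat \<Rightarrow> (nat \<Rightarrow> nat \<Rightarrow> int) \<Rightarrow> nat \<Rightarrow> int" where
  "Sig n i b k = (\<Sum>s\<in>{k..n + 1 - i}. dd b s i)"

definition eps :: "nat \<Rightarrow> nat \<Rightarrow> (nat \<Rightarrow> nat \<Rightarrow> int) \<Rightarrow> int" where
  "eps n i b = Max (Sig n i b ` {1..n + 1 - i})"

definition mi :: "nat \<Rightarrow> nat \<Rightarrow> (nat \<Rightarrow> nat \<Rightarrow> int) \<Rightarrow> nat" where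
  "mi n i b = (LEAST k. k \<in> {1..n + 1 - i} \<and> Sig n i b k = eps n i b)"

definition ftil :: "nat \<Rightarrow> nat \<Rightarrow> (nat \<Rightarrow> nat \<Rightarrow> int) \<Rightarrow> (nat \<Rightarrow> nat \<Rightarrow> int)" where
  "ftil n i b = (\<lambda>s t. b s t + unitv n (mi n i b) i s t)"

definition Sigs :: "nat \<Rightarrow> (nat \<Rightarrow> nat \<Rightarrow> int) \<Rightarrow> nat \<Rightarrow> int" where
  "Sigs i b k = (\<Sum>t\<in>{1..k}. dds b t (i + 1 - t))"

definition epss :: "nat \<Rightarrow> (nat \<Rightarrow> nat \<Rightarrow> int) \<Rightarrow> int" where
  "epss i b = Max (Sigs i b ` {1..i})"

definition mis :: "nat \<Rightarrow> (nat \<Rightarrow> nat \<Rightarrow> int) \<Rightarrow> nat" where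
  "mis i b = (LEAST k. k \<in> {1..i} \<and> Sigs i b k = epss i b)"

definition ftils :: "nat \<Rightarrow> nat \<Rightarrow> (nat \<Rightarrow> nat \<Rightarrow> int) \<Rightarrow> (nat \<Rightarrow> nat \<Rightarrow> int)" where
  "ftils n i b = (\<lambda>s t. b s t + (\<Sum>u\<in>{1..mis i b}.
        unitv n u (i + 1 - u) s t - unitv n (u - 1) (i + 1 - u) s t))"

definition jump :: "nat \<Rightarrow> nat \<Rightarrow> (nat \<Rightarrow> nat \<Rightarrow> int) \<Rightarrow> int" where
  "jump n i b = eps n i b + epss i b + pair_h n i (wt n b)"

end

theory Submission
  imports Defs
begin

text \<open>Summing \<open>\<partial>\<^sub>s\<^sub>,\<^sub>i\<close> down the whole column \<open>s = 1, \<dots>, n+1-i\<close> leaves a second difference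
  of column sums, i.e. \<open>-\<langle>h\<^sub>i, wt b\<rangle>\<close>, minus the boundary terms \<open>b\<^sub>1\<^sub>,\<^sub>i - b\<^sub>1\<^sub>,\<^sub>i\<^sub>-\<^sub>1\<close>, and
  these are exactly \<open>\<Sigma>\<^sup>*\<^sub>1(b)\<close>. Hence \<open>\<langle>h\<^sub>i, wt b\<rangle> = -\<Sigma>\<^sub>1(b) - \<Sigma>\<^sup>*\<^sub>1(b)\<close>, which is (1), and
  both brackets in (1) are nonnegative because \<open>\<epsilon>\<^sub>i, \<epsilon>\<^sup>*\<^sub>i\<close> are maxima over ranges
  containing \<open>k = 1\<close>. If the jump vanishes, both maxima are attained at \<open>k = 1\<close>, so
  \<open>m\<^sub>i(b) = m\<^sup>*\<^sub>i(b) = 1\<close> and both operators add \<open>e\<^sub>1\<^sub>,\<^sub>i\<close>.\<close>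

lemma Binf_vanish: "b \<in> Binf n \<Longrightarrow> (s, t) \<notin> calI n \<Longrightarrow> b s t = 0"
  unfolding Binf_def by auto

lemma Binf_column_sum:
  assumes b: "b \<in> Binf n" and M: "n + 1 - t \<le> M"
  shows "(\<Sum>s\<in>{1..M}. b s t) = - wt n b t"
proof -
  have out: "b s t = 0" if "n + 1 - t < s" for s
    using that by (intro Binf_vanish[OF b]) (auto simp: calI_def)
  have "(\<Sum>s\<in>{1..M}. b s t) = (\<Sum>s\<in>{1..M + n}. b s t)"
    by (rule sum.mono_neutral_left) (use M out in auto)
  also have "\<dots> = (\<Sum>s\<in>{1..n}. b s t)"
    by (rule sum.mono_neutral_right) (auto intro!: Binf_vanish[OF b] simp: calI_def)
  finally show ?thesis by (simp add: wt_def)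
qed

lemma Binf_shifted_column_sum:
  assumes b: "b \<in> Binf n" and M: "n - t \<le> M"
  shows "(\<Sum>s\<in>{1..M}. b (s + 1) t) = - wt n b t - b 1 t"
proof -
  have "(\<Sum>s\<in>{1..M}. b (s + 1) t) = (\<Sum>s\<in>{2..M + 1}. b s t)"
    by (rule sum.reindex_bij_witness[of _ "\<lambda>s. s - 1" "\<lambda>s. s + 1"]) auto
  also have "\<dots> = (\<Sum>s\<in>{1..M + 1}. b s t) - b 1 t"
    by (simp add: sum.atLeast_Suc_atMost numeral_2_eq_2)
  also have "\<dots> = - wt n b t - b 1 t"
    using Binf_column_sum[OF b, of t "M + 1"] M by simp
  finally show ?thesis .
qed

lemma wt_boundary:
  assumes "b \<in> Binf n"
  shows "wt n b 0 = 0" and "wt n b (n + 1) = 0"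
  using assms by (auto simp: wt_def calI_def intro!: sum.neutral Binf_vanish)

lemma pair_h_eq_second_difference:
  fixes lam :: "nat \<Rightarrow> int"
  assumes i: "i \<in> {1..n}" and "lam 0 = 0" and "lam (n + 1) = 0"
  shows "pair_h n i lam = 2 * lam i - lam (i - 1) - lam (i + 1)"
proof -
  have "pair_h n i lam = (\<Sum>t\<in>{0..n + 1}. cartan i t * lam t)"
    unfolding pair_h_def
  proof (rule sum.mono_neutral_left)
    show "\<forall>t\<in>{0..n + 1} - {1..n}. cartan i t * lam t = 0"
      using assms by (auto simp: le_Suc_eq not_less_eq_eq)
  qed auto
  also have "\<dots> = (\<Sum>t\<in>{0..n + 1}. (if i = t then 2 * lam t else 0)
      + (if i - 1 = t then - lam t else 0) + (if i + 1 = t then - lam t else 0))"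
    by (rule sum.cong) (use i in \<open>auto simp: cartan_def\<close>)
  also have "\<dots> = 2 * lam i - lam (i - 1) - lam (i + 1)"
    unfolding sum.distrib using assms by (auto simp: sum.delta)
  finally show ?thesis .
qed

lemma Sig_1_eq:
  assumes i: "i \<in> {1..n}" and b: "b \<in> Binf n"
  shows "Sig n i b 1 = wt n b (i - 1) + wt n b (i + 1) - 2 * wt n b i + b 1 (i - 1) - b 1 i"
proof -
  let ?N = "n + 1 - i"
  have "Sig n i b 1 = (\<Sum>s\<in>{1..?N}. b s i) - (\<Sum>s\<in>{1..?N}. b s (i + 1))
      - (\<Sum>s\<in>{1..?N}. b (s + 1) (i - 1)) + (\<Sum>s\<in>{1..?N}. b (s + 1) i)"
    unfolding Sig_def dd_def by (simp add: sum.distrib sum_subtractf)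
  then show ?thesis
    using i Binf_column_sum[OF b, of i ?N] Binf_column_sum[OF b, of "i + 1" ?N]
      Binf_shifted_column_sum[OF b, of "i - 1" ?N] Binf_shifted_column_sum[OF b, of i ?N]
    by simp
qed

lemma Sigs_1_eq: "b \<in> Binf n \<Longrightarrow> Sigs i b 1 = b 1 i - b 1 (i - 1)"
  unfolding Sigs_def dds_def by (simp add: Binf_vanish calI_def)

lemma pair_h_wt_eq:
  assumes "i \<in> {1..n}" and "b \<in> Binf n"
  shows "pair_h n i (wt n b) = - Sig n i b 1 - Sigs i b 1"
proof -
  have "pair_h n i (wt n b) = 2 * wt n b i - wt n b (i - 1) - wt n b (i + 1)"
    by (rule pair_h_eq_second_difference[OF assms(1) wt_boundary[OF assms(2)]])
  then show ?thesis
    using Sig_1_eq[OF assms] Sigs_1_eq[OF assms(2)] by simp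
qed

lemma Sig_1_le_eps: "i \<in> {1..n} \<Longrightarrow> Sig n i b 1 \<le> eps n i b"
  unfolding eps_def by (rule Max_ge) auto

lemma Sigs_1_le_epss: "1 \<le> i \<Longrightarrow> Sigs i b 1 \<le> epss i b"
  unfolding epss_def by (rule Max_ge) auto

lemma mi_eq_1: "i \<in> {1..n} \<Longrightarrow> eps n i b = Sig n i b 1 \<Longrightarrow> mi n i b = 1"
  unfolding mi_def by (rule Least_equality) auto

lemma mis_eq_1: "1 \<le> i \<Longrightarrow> epss i b = Sigs i b 1 \<Longrightarrow> mis i b = 1"
  unfolding mis_def by (rule Least_equality) auto

lemma ftil_eq_ftils_if_m_eq_1:
  assumes "mi n i b = 1" and "mis i b = 1"
  shows "ftil n i b = ftils n i b"
  unfolding ftil_def ftils_def assms by (auto simp: unitv_def calI_def)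

theorem proposition6p7:
  fixes n i :: nat and b :: "nat \<Rightarrow> nat \<Rightarrow> int"
  assumes "i \<in> {1..n}" and "b \<in> Binf n"
  shows "jump n i b = (eps n i b - Sig n i b 1) + (epss i b - Sigs i b 1)
         \<and> jump n i b \<ge> 0
         \<and> (jump n i b = 0 \<longrightarrow> ftil n i b = ftils n i b)"
proof -
  have jump_eq: "jump n i b = (eps n i b - Sig n i b 1) + (epss i b - Sigs i b 1)"
    unfolding jump_def using pair_h_wt_eq[OF assms] by simp
  have le: "Sig n i b 1 \<le> eps n i b" "Sigs i b 1 \<le> epss i b"
    using assms(1) Sig_1_le_eps Sigs_1_le_epss by auto
  have "ftil n i b = ftils n i b" if "jump n i b = 0"
  proof (rule ftil_eq_ftils_if_m_eq_1)
    have "eps n i b = Sig n i b 1" "epss i b = Sigs i b 1"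
      using jump_eq le that by auto
    then show "mi n i b = 1" "mis i b = 1"
      using mi_eq_1[OF assms(1)] mis_eq_1 assms(1) by auto
  qed
  with jump_eq le show ?thesis by auto
qed

end
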